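(* For every integer $S\ge1$, with $R=2S+1$, one has $\Vert T_R\Vert^2<\pi^2-\dfrac{6}{S+1}$. Moreover, for every integer $R\ge1$, $\pi-\Vert T_R\Vert\ge\dfrac{\pi}{2R}$.
   Context: $T_R$ is the $R\times R$ matrix with $(T_R)_{m,n}=0$ if $m=n$ and $(T_R)_{m,n}=\frac{1}{m-n}$ if $m\ne n$, $1\le m,n\le R$. $\Vert\cdot\Vert$ is the operator norm induced by the Euclidean norm. *)

theory Defs
  imports "HOL-Analysis.Analysis"
begin

definition Tmat :: "nat \<Rightarrow> nat \<Rightarrow> real" where
  "Tmat m n = (if m = n then 0 else 1 / (real_of_int (int m - int n)))"

definition mat_opnorm :: "nat \<Rightarrow> (nat \<Rightarrow> nat \<Rightarrow> real) \<Rightarrow> real" where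
  "mat_opnorm R A = Sup {sqrt (\<Sum>m\<in>{1..R}. (\<Sum>n\<in>{1..R}. A m n * x n)\<^sup>2) | x.
                          (\<Sum>n\<in>{1..R}. (x n)\<^sup>2) \<le> 1}"

end

theory Submission
  imports Defs
begin

text \<open>Let \<open>\<mu> = \<parallel>T\<parallel>\<^sup>2\<close> be the top eigenvalue of \<open>T\<^sup>T T\<close>, with unit eigenvector
  \<open>x\<^sub>0\<close>, and \<open>y = T x\<^sub>0\<close>; skew-symmetry gives \<open>T y = -\<mu> x\<^sub>0\<close>. The partial fraction
  identity \<open>1/((m-n)(m-n')) = (1/(n-n')) (1/(m-n) - 1/(m-n'))\<close> splits \<open>T\<^sup>T T\<close> into a
  symmetric part \<open>G\<close>, whose quadratic form is at most \<open>3 max\<^sub>n Q\<^sub>n \<parallel>z\<parallel>\<^sup>2\<close> with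
  \<open>Q\<^sub>n = \<Sum>\<^sub>m T\<^sub>m\<^sub>n\<^sup>2\<close>, and a part built from the column sums whose contributions at
  \<open>x\<^sub>0\<close> and at \<open>y\<close> cancel: \<open>2\<mu>\<^sup>2 = \<mu> G(x\<^sub>0) + G(y)\<close>, so \<open>\<mu> \<le> 3 max\<^sub>n Q\<^sub>n\<close>.
  Each \<open>Q\<^sub>n\<close> is a sum of two partial sums of \<open>\<Sum> 1/k\<^sup>2\<close>, and the tail estimate
  \<open>\<Sum>\<^sub>j\<^sub><\<^sub>k 1/(j+1)\<^sup>2 + 1/(k+1) < \<pi>\<^sup>2/6\<close> yields \<open>\<mu> < \<pi>\<^sup>2 - 12/(R+1)\<close>. This implies
  the second claim for \<open>R \<ge> 4\<close>; for \<open>R \<le> 3\<close> the crude bound \<open>Q\<^sub>n \<le> R - 1\<close> suffices.\<close>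

definition matvec :: "nat \<Rightarrow> (nat \<Rightarrow> nat \<Rightarrow> real) \<Rightarrow> (nat \<Rightarrow> real) \<Rightarrow> nat \<Rightarrow> real" where
  "matvec R A x m = (\<Sum>n\<in>{1..R}. A m n * x n)"

definition sqnorm :: "nat \<Rightarrow> (nat \<Rightarrow> real) \<Rightarrow> real" where
  "sqnorm R x = (\<Sum>n\<in>{1..R}. (x n)\<^sup>2)"

lemma sqnorm_nonneg: "0 \<le> sqnorm R x"
  by (simp add: sqnorm_def sum_nonneg)

lemma sqnorm_eq_0_iff: "sqnorm R x = 0 \<longleftrightarrow> (\<forall>n\<in>{1..R}. x n = 0)"
  by (simp add: sqnorm_def sum_nonneg_eq_0_iff)

lemma matvec_scale: "matvec R A (\<lambda>n. a * x n) = (\<lambda>m. a * matvec R A x m)"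
  by (simp add: matvec_def sum_distrib_left mult_ac fun_eq_iff)

lemma sqnorm_scale: "sqnorm R (\<lambda>n. a * x n) = a\<^sup>2 * sqnorm R x"
  by (simp add: sqnorm_def sum_distrib_left power_mult_distrib)

lemma matvec_add_unit:
  assumes "k \<in> {1..R}"
  shows "matvec R A (\<lambda>n. x n + t * (if n = k then 1 else 0)) m = matvec R A x m + t * A m k"
proof -
  have "matvec R A (\<lambda>n. x n + t * (if n = k then 1 else 0)) m
      = (\<Sum>n\<in>{1..R}. A m n * x n + (if n = k then t * A m k else 0))"
    unfolding matvec_def by (intro sum.cong) (auto simp: algebra_simps)
  then show ?thesis
    using assms by (simp add: sum.distrib matvec_def)
qed

lemma sqnorm_add_unit:
  assumes "k \<in> {1..R}"
  shows "sqnorm R (\<lambda>n. x n + t * (if n = k then 1 else 0)) = sqnorm R x + 2 * t * x k + t\<^sup>2"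
proof -
  have "sqnorm R (\<lambda>n. x n + t * (if n = k then 1 else 0))
      = (\<Sum>n\<in>{1..R}. (x n)\<^sup>2 + (if n = k then 2 * t * x k + t\<^sup>2 else 0))"
    unfolding sqnorm_def by (intro sum.cong) (auto simp: power2_sum algebra_simps)
  then show ?thesis
    using assms by (simp add: sum.distrib sqnorm_def)
qed

lemma mat_opnorm_sq_le:
  assumes "\<forall>x. sqnorm R (matvec R A x) \<le> b * sqnorm R x" and "0 \<le> b"
  shows "(mat_opnorm R A)\<^sup>2 \<le> b"
proof -
  define V where "V = {sqrt (sqnorm R (matvec R A x)) | x. sqnorm R x \<le> 1}"
  have opnorm: "mat_opnorm R A = Sup V"
    by (simp add: mat_opnorm_def V_def matvec_def sqnorm_def)
  have bound: "v \<le> sqrt b" if "v \<in> V" for v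
  proof -
    obtain x where "v = sqrt (sqnorm R (matvec R A x))" and "sqnorm R x \<le> 1"
      using \<open>v \<in> V\<close> by (auto simp: V_def)
    moreover have "b * sqnorm R x \<le> b"
      using \<open>sqnorm R x \<le> 1\<close> \<open>0 \<le> b\<close> by (simp add: mult_left_le)
    ultimately show ?thesis
      using assms(1) by (metis order_trans real_sqrt_le_iff)
  qed
  have "0 \<in> V"
    unfolding V_def by (rule CollectI, rule exI[of _ "\<lambda>_. 0"]) (simp add: sqnorm_def matvec_def)
  then have "0 \<le> Sup V" and "Sup V \<le> sqrt b"
    using bound by (meson bdd_aboveI cSup_upper, intro cSup_least) auto
  then show ?thesis
    unfolding opnorm using \<open>0 \<le> b\<close> by (metis real_sqrt_pow2 power_mono)
qed

lemma continuous_map_sqnorm_matvec: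
  "continuous_map (product_topology (\<lambda>_. euclideanreal) {1..R}) euclideanreal
     (\<lambda>x. sqnorm R (matvec R A x))"
  unfolding sqnorm_def matvec_def
  by (intro continuous_map_sum continuous_map_real_pow continuous_map_real_mult_left
        continuous_map_product_projection) auto

lemma continuous_map_sqnorm:
  "continuous_map (product_topology (\<lambda>_. euclideanreal) {1..R}) euclideanreal (sqnorm R)"
  unfolding sqnorm_def
  by (intro continuous_map_sum continuous_map_real_pow continuous_map_product_projection) auto

lemma sqnorm_restrict: "sqnorm R (restrict x {1..R}) = sqnorm R x"
  by (simp add: sqnorm_def)

lemma matvec_restrict: "matvec R A (restrict x {1..R}) = matvec R A x"
  by (simp add: matvec_def fun_eq_iff)

text \<open>Restricting to \<open>{1..R}\<close> puts the unit ball inside the compact cube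
  \<open>PiE {1..R} (\<lambda>_. {-1..1})\<close> of the product topology.\<close>
lemma sqnorm_matvec_maximizer_exists:
  "\<exists>x0. sqnorm R x0 \<le> 1 \<and>
        (\<forall>x. sqnorm R x \<le> 1 \<longrightarrow> sqnorm R (matvec R A x) \<le> sqnorm R (matvec R A x0))"
proof -
  define X where "X = product_topology (\<lambda>_::nat. euclideanreal) {1..R}"
  define B where "B = {x \<in> topspace X. sqnorm R x \<in> {..1}} \<inter> PiE {1..R} (\<lambda>_. {-1..1::real})"
  define f where "f x = sqnorm R (matvec R A x)" for x
  have "closedin X {x \<in> topspace X. sqnorm R x \<in> {..1}}"
    unfolding X_def by (rule closedin_continuous_map_preimage[OF continuous_map_sqnorm]) simp
  then have "compactin X B"
    unfolding B_def X_def by (intro closed_Int_compactin) (simp_all add: compactin_PiE)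
  then have "compact (f ` B)"
    using continuous_map_sqnorm_matvec unfolding X_def f_def
    by (metis compactin_euclidean_iff image_compactin)
  have restrict_in_B: "restrict x {1..R} \<in> B" if "sqnorm R x \<le> 1" for x
  proof -
    have "(x n)\<^sup>2 \<le> 1" if "n \<in> {1..R}" for n
      using member_le_sum[of n "{1..R}" "\<lambda>n. (x n)\<^sup>2"] that \<open>sqnorm R x \<le> 1\<close>
      by (simp add: sqnorm_def)
    moreover have "sqnorm R (restrict x {1..R}) \<le> 1"
      using that by (simp only: sqnorm_restrict)
    ultimately show ?thesis
      by (auto simp: B_def X_def abs_square_le_1 abs_le_iff)
  qed
  have "f ` B \<noteq> {}"
    using restrict_in_B[of "\<lambda>_. 0"] by (auto simp: sqnorm_def)
  then obtain x0 where "x0 \<in> B" and max: "\<forall>y\<in>B. f y \<le> f x0"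
    using compact_attains_sup[OF \<open>compact (f ` B)\<close>] by auto
  have "f x \<le> f x0" if "sqnorm R x \<le> 1" for x
    using max restrict_in_B[OF that] unfolding f_def by (metis matvec_restrict)
  moreover have "sqnorm R x0 \<le> 1"
    using \<open>x0 \<in> B\<close> by (simp add: B_def)
  ultimately show ?thesis
    unfolding f_def by blast
qed

lemma linear_coeff_eq_0_if_quadratic_nonneg:
  fixes a h :: real
  assumes "\<forall>t. 0 \<le> 2 * t * h + t\<^sup>2 * a"
  shows "h = 0"
proof (rule ccontr)
  assume "h \<noteq> 0"
  define b where "b = \<bar>a\<bar> + 1"
  have "0 < b" and "a - 2 * b < 0"
    by (simp_all add: b_def)
  have "2 * (- h / b) * h + (- h / b)\<^sup>2 * a = h\<^sup>2 * (a - 2 * b) / b\<^sup>2"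
    using \<open>0 < b\<close> by (simp add: field_simps power2_eq_square)
  also have "\<dots> < 0"
    using \<open>h \<noteq> 0\<close> \<open>0 < b\<close> \<open>a - 2 * b < 0\<close> by (intro divide_neg_pos mult_pos_neg) auto
  finally show False
    using assms by (meson not_le)
qed

lemma sqnorm_matvec_le_homogeneous:
  assumes "\<forall>x. sqnorm R x \<le> 1 \<longrightarrow> sqnorm R (matvec R A x) \<le> \<mu>"
  shows "sqnorm R (matvec R A x) \<le> \<mu> * sqnorm R x"
proof (cases "sqnorm R x = 0")
  case True
  then have "matvec R A x = (\<lambda>_. 0)"
    by (simp add: sqnorm_eq_0_iff matvec_def fun_eq_iff)
  then show ?thesis
    using True by (simp add: sqnorm_def)
next
  case False
  then have pos: "0 < sqnorm R x"
    using sqnorm_nonneg[of R x] by linarith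
  define a where "a = 1 / sqrt (sqnorm R x)"
  have a2: "a\<^sup>2 = 1 / sqnorm R x"
    using pos by (simp add: a_def power_divide)
  have "sqnorm R (\<lambda>n. a * x n) = 1"
    using pos by (simp add: sqnorm_scale a2)
  then have "sqnorm R (matvec R A (\<lambda>n. a * x n)) \<le> \<mu>"
    using assms[rule_format, of "\<lambda>n. a * x n"] by simp
  then have "sqnorm R (matvec R A x) / sqnorm R x \<le> \<mu>"
    by (simp add: matvec_scale sqnorm_scale a2)
  then show ?thesis
    using pos by (simp add: divide_le_eq mult.commute)
qed

text \<open>First-order condition: perturb the maximizer \<open>x\<^sub>0\<close> along the \<open>k\<close>-th unit vector.\<close>
lemma transpose_matvec_matvec_at_maximizer:
  assumes hom: "\<forall>x. sqnorm R (matvec R A x) \<le> \<mu> * sqnorm R x"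
    and x0: "sqnorm R x0 = 1" "sqnorm R (matvec R A x0) = \<mu>" and k: "k \<in> {1..R}"
  shows "matvec R (\<lambda>m n. A n m) (matvec R A x0) k = \<mu> * x0 k"
proof -
  define g where "g = matvec R (\<lambda>m n. A n m) (matvec R A x0) k"
  define q where "q = (\<Sum>m\<in>{1..R}. (A m k)\<^sup>2)"
  have "0 \<le> 2 * t * (\<mu> * x0 k - g) + t\<^sup>2 * (\<mu> - q)" for t
  proof -
    define xt where "xt n = x0 n + t * (if n = k then 1 else 0)" for n
    have "sqnorm R (matvec R A xt) = \<mu> + 2 * t * g + t\<^sup>2 * q"
      unfolding xt_def sqnorm_def matvec_add_unit[OF k] g_def q_def x0(2)[symmetric]
      by (simp add: power2_sum sum.distrib sum_distrib_left algebra_simps power_mult_distrib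
          matvec_def[of R "\<lambda>m n. A n m"])
    moreover have "sqnorm R xt = 1 + 2 * t * x0 k + t\<^sup>2"
      unfolding xt_def sqnorm_add_unit[OF k] x0(1) ..
    ultimately show ?thesis
      using hom[rule_format, of xt] by (simp add: algebra_simps)
  qed
  then have "\<mu> * x0 k - g = 0"
    by (intro linear_coeff_eq_0_if_quadratic_nonneg) blast
  then show ?thesis
    by (simp add: g_def)
qed

lemma top_singular_vector_exists:
  assumes "1 \<le> R"
  obtains x0 where "sqnorm R x0 = 1"
    and "\<forall>x. sqnorm R (matvec R A x) \<le> sqnorm R (matvec R A x0) * sqnorm R x"
    and "\<forall>k\<in>{1..R}. matvec R (\<lambda>m n. A n m) (matvec R A x0) k = sqnorm R (matvec R A x0) * x0 k"
proof -
  obtain x1 where x1: "sqnorm R x1 \<le> 1"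
    and max: "\<forall>x. sqnorm R x \<le> 1 \<longrightarrow> sqnorm R (matvec R A x) \<le> sqnorm R (matvec R A x1)"
    using sqnorm_matvec_maximizer_exists by blast
  define \<mu> where "\<mu> = sqnorm R (matvec R A x1)"
  have hom: "\<forall>x. sqnorm R (matvec R A x) \<le> \<mu> * sqnorm R x"
    using sqnorm_matvec_le_homogeneous max unfolding \<mu>_def by blast
  have "\<exists>x0. sqnorm R x0 = 1 \<and> \<mu> \<le> sqnorm R (matvec R A x0)"
  proof (cases "sqnorm R x1 = 0")
    case True
    then have "\<mu> \<le> 0"
      using hom[rule_format, of x1] by (simp add: \<mu>_def)
    moreover have "sqnorm R (\<lambda>n. if n = 1 then 1 else 0) = (\<Sum>n\<in>{1..R}. if n = 1 then 1 else 0)"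
      unfolding sqnorm_def by (intro sum.cong) auto
    then have "sqnorm R (\<lambda>n. if n = 1 then 1 else 0) = 1"
      using assms by simp
    ultimately show ?thesis
      using sqnorm_nonneg by (meson order_trans)
  next
    case False
    define a where "a = 1 / sqrt (sqnorm R x1)"
    have a2: "a\<^sup>2 = 1 / sqnorm R x1"
      using sqnorm_nonneg[of R x1] by (simp add: a_def power_divide)
    have "sqnorm R (\<lambda>n. a * x1 n) = 1"
      using False by (simp add: sqnorm_scale a2)
    moreover have "\<mu> \<le> a\<^sup>2 * \<mu>"
      using False x1 sqnorm_nonneg[of R x1] sqnorm_nonneg[of R "matvec R A x1"]
      by (simp add: a2 \<mu>_def field_simps mult_left_le_one_le)
    ultimately show ?thesis
      by (intro exI[of _ "\<lambda>n. a * x1 n"]) (simp add: matvec_scale sqnorm_scale \<mu>_def)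
  qed
  then obtain x0 where "sqnorm R x0 = 1" and "sqnorm R (matvec R A x0) = \<mu>"
    using hom by (metis mult.right_neutral order_antisym)
  then show ?thesis
    using that hom transpose_matvec_matvec_at_maximizer by presburger
qed

lemma sqnorm_matvec_eq_gram:
  "sqnorm R (matvec R A z)
     = (\<Sum>n\<in>{1..R}. \<Sum>n'\<in>{1..R}. z n * z n' * (\<Sum>m\<in>{1..R}. A m n * A m n'))"
proof -
  have "sqnorm R (matvec R A z)
      = (\<Sum>m\<in>{1..R}. \<Sum>n\<in>{1..R}. \<Sum>n'\<in>{1..R}. (A m n * z n) * (A m n' * z n'))"
    by (simp add: sqnorm_def matvec_def power2_eq_square sum_product)
  also have "\<dots> = (\<Sum>n\<in>{1..R}. \<Sum>n'\<in>{1..R}. \<Sum>m\<in>{1..R}. (A m n * z n) * (A m n' * z n'))"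
    by (subst sum.swap) (intro sum.cong refl sum.swap)
  finally show ?thesis
    by (simp add: sum_distrib_left mult_ac)
qed

lemma Tmat_diag [simp]: "Tmat n n = 0"
  by (simp add: Tmat_def)

lemma Tmat_skew: "Tmat m n = - Tmat n m"
  by (simp add: Tmat_def) (metis minus_diff_eq minus_divide_right)

lemma Tmat_partial_fractions:
  assumes "n \<noteq> n'"
  shows "Tmat m n * Tmat m n'
    = Tmat n n' * (Tmat m n - Tmat m n') + (if m = n \<or> m = n' then (Tmat n n')\<^sup>2 else 0)"
proof (cases "m = n \<or> m = n'")
  case True
  then show ?thesis
    using Tmat_skew[of n' n] by (auto simp: power2_eq_square)
next
  case False
  then show ?thesis
    using assms by (auto simp: Tmat_def power2_eq_square field_simps)
qed

lemma matvec_transpose_Tmat: "matvec R (\<lambda>m n. Tmat n m) z k = - matvec R Tmat z k"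
  unfolding matvec_def sum_negf[symmetric] by (intro sum.cong refl) (simp add: Tmat_skew[of _ k])

definition Tmat_col_sum :: "nat \<Rightarrow> nat \<Rightarrow> real" where
  "Tmat_col_sum R n = (\<Sum>m\<in>{1..R}. Tmat m n)"

definition Tmat_col_sqsum :: "nat \<Rightarrow> nat \<Rightarrow> real" where
  "Tmat_col_sqsum R n = (\<Sum>m\<in>{1..R}. (Tmat m n)\<^sup>2)"

lemma Tmat_col_sqsum_nonneg: "0 \<le> Tmat_col_sqsum R n"
  by (simp add: Tmat_col_sqsum_def sum_nonneg)

lemma Tmat_gram_entry:
  assumes "n \<in> {1..R}" "n' \<in> {1..R}"
  shows "(\<Sum>m\<in>{1..R}. Tmat m n * Tmat m n')
    = (if n = n' then Tmat_col_sqsum R n else 0) + 2 * (Tmat n n')\<^sup>2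
      + Tmat n n' * (Tmat_col_sum R n - Tmat_col_sum R n')"
proof (cases "n = n'")
  case True
  then show ?thesis
    by (simp add: Tmat_col_sqsum_def power2_eq_square)
next
  case False
  have "(\<Sum>m\<in>{1..R}. Tmat m n * Tmat m n')
      = (\<Sum>m\<in>{1..R}. Tmat n n' * (Tmat m n - Tmat m n')
           + ((if m = n then (Tmat n n')\<^sup>2 else 0) + (if m = n' then (Tmat n n')\<^sup>2 else 0)))"
    using False by (intro sum.cong refl) (auto simp: Tmat_partial_fractions)
  also have "\<dots> = Tmat n n' * (Tmat_col_sum R n - Tmat_col_sum R n') + 2 * (Tmat n n')\<^sup>2"
    using assms
    by (simp add: sum.distrib right_diff_distrib sum_subtractf sum_distrib_left Tmat_col_sum_def)
  finally show ?thesis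
    using False by simp
qed

text \<open>The symmetric part \<open>G\<close> of the Gram matrix in \<open>Tmat_gram_entry\<close>; the remaining
  entries \<open>T\<^sub>n\<^sub>n\<^sub>' (s\<^sub>n - s\<^sub>n\<^sub>')\<close> pair \<open>z\<close> with \<open>T z\<close>.\<close>
definition gram_principal_form :: "nat \<Rightarrow> (nat \<Rightarrow> real) \<Rightarrow> real" where
  "gram_principal_form R z = (\<Sum>n\<in>{1..R}. Tmat_col_sqsum R n * (z n)\<^sup>2)
     + 2 * (\<Sum>n\<in>{1..R}. \<Sum>n'\<in>{1..R}. (Tmat n n')\<^sup>2 * z n * z n')"

lemma sqnorm_matvec_Tmat_eq:
  "sqnorm R (matvec R Tmat z)
     = gram_principal_form R z + 2 * (\<Sum>n\<in>{1..R}. Tmat_col_sum R n * z n * matvec R Tmat z n)"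
proof -
  let ?s = "Tmat_col_sum R"
  have "sqnorm R (matvec R Tmat z)
      = (\<Sum>n\<in>{1..R}. \<Sum>n'\<in>{1..R}. (if n = n' then Tmat_col_sqsum R n * (z n)\<^sup>2 else 0)
           + 2 * ((Tmat n n')\<^sup>2 * z n * z n') + ?s n * z n * (Tmat n n' * z n')
           - ?s n' * z n' * (Tmat n n' * z n))"
    unfolding sqnorm_matvec_eq_gram
    by (intro sum.cong refl, subst Tmat_gram_entry) (auto simp: algebra_simps power2_eq_square)
  also have "\<dots> = gram_principal_form R z
      + (\<Sum>n\<in>{1..R}. ?s n * z n * matvec R Tmat z n)
      - (\<Sum>n\<in>{1..R}. \<Sum>n'\<in>{1..R}. ?s n' * z n' * (Tmat n n' * z n))"
    by (simp add: gram_principal_form_def matvec_def sum.distrib sum_subtractf sum_distrib_left)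
  also have "(\<Sum>n\<in>{1..R}. \<Sum>n'\<in>{1..R}. ?s n' * z n' * (Tmat n n' * z n))
      = - (\<Sum>n\<in>{1..R}. ?s n * z n * matvec R Tmat z n)"
  proof -
    have "(\<Sum>n\<in>{1..R}. \<Sum>n'\<in>{1..R}. ?s n' * z n' * (Tmat n n' * z n))
        = (\<Sum>n'\<in>{1..R}. ?s n' * z n' * matvec R (\<lambda>m n. Tmat n m) z n')"
      by (subst sum.swap) (simp add: matvec_def sum_distrib_left)
    then show ?thesis
      by (simp add: matvec_transpose_Tmat sum_negf)
  qed
  finally show ?thesis
    by simp
qed

lemma gram_principal_form_le:
  assumes "\<forall>n\<in>{1..R}. Tmat_col_sqsum R n \<le> c"
  shows "gram_principal_form R z \<le> 3 * c * sqnorm R z"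
proof -
  have row: "(\<Sum>n'\<in>{1..R}. (Tmat n n')\<^sup>2) = Tmat_col_sqsum R n" for n
    unfolding Tmat_col_sqsum_def by (metis Tmat_skew power2_minus)
  have "2 * (\<Sum>n\<in>{1..R}. \<Sum>n'\<in>{1..R}. (Tmat n n')\<^sup>2 * z n * z n')
     \<le> (\<Sum>n\<in>{1..R}. \<Sum>n'\<in>{1..R}. (Tmat n n')\<^sup>2 * (z n)\<^sup>2 + (Tmat n n')\<^sup>2 * (z n')\<^sup>2)"
    unfolding sum_distrib_left
  proof (intro sum_mono)
    fix n n'
    have "(Tmat n n')\<^sup>2 * (2 * (z n * z n')) \<le> (Tmat n n')\<^sup>2 * ((z n)\<^sup>2 + (z n')\<^sup>2)"
      using sum_squares_bound[of "z n" "z n'"] by (intro mult_left_mono) (simp_all add: mult.assoc)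
    then show "2 * ((Tmat n n')\<^sup>2 * z n * z n') \<le> (Tmat n n')\<^sup>2 * (z n)\<^sup>2 + (Tmat n n')\<^sup>2 * (z n')\<^sup>2"
      by (simp add: algebra_simps)
  qed
  also have "\<dots> = 2 * (\<Sum>n\<in>{1..R}. Tmat_col_sqsum R n * (z n)\<^sup>2)"
  proof -
    have "(\<Sum>n\<in>{1..R}. \<Sum>n'\<in>{1..R}. (Tmat n n')\<^sup>2 * (z n)\<^sup>2)
        = (\<Sum>n\<in>{1..R}. Tmat_col_sqsum R n * (z n)\<^sup>2)"
      by (simp only: sum_distrib_right[symmetric] row)
    moreover have "(\<Sum>n\<in>{1..R}. \<Sum>n'\<in>{1..R}. (Tmat n n')\<^sup>2 * (z n')\<^sup>2)
        = (\<Sum>n\<in>{1..R}. Tmat_col_sqsum R n * (z n)\<^sup>2)"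
      by (subst sum.swap) (simp add: sum_distrib_right[symmetric] Tmat_col_sqsum_def)
    ultimately show ?thesis
      by (simp add: sum.distrib)
  qed
  finally have "gram_principal_form R z \<le> 3 * (\<Sum>n\<in>{1..R}. Tmat_col_sqsum R n * (z n)\<^sup>2)"
    unfolding gram_principal_form_def by linarith
  also have "\<dots> \<le> 3 * (\<Sum>n\<in>{1..R}. c * (z n)\<^sup>2)"
    using assms by (intro mult_left_mono sum_mono mult_right_mono) auto
  finally show ?thesis
    by (simp add: sqnorm_def sum_distrib_left mult.assoc)
qed

lemma sqnorm_matvec_Tmat_le:
  assumes "1 \<le> R" and col: "\<forall>n\<in>{1..R}. Tmat_col_sqsum R n \<le> c"
  shows "sqnorm R (matvec R Tmat x) \<le> 3 * c * sqnorm R x"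
proof -
  obtain x0 where x0: "sqnorm R x0 = 1"
    and hom: "\<forall>x. sqnorm R (matvec R Tmat x) \<le> sqnorm R (matvec R Tmat x0) * sqnorm R x"
    and eigen: "\<forall>k\<in>{1..R}. matvec R (\<lambda>m n. Tmat n m) (matvec R Tmat x0) k
                              = sqnorm R (matvec R Tmat x0) * x0 k"
    using top_singular_vector_exists[OF \<open>1 \<le> R\<close>] by blast
  define y where "y = matvec R Tmat x0"
  define \<mu> where "\<mu> = sqnorm R y"
  define p where "p = (\<Sum>n\<in>{1..R}. Tmat_col_sum R n * x0 n * y n)"
  have Ty: "matvec R Tmat y k = - (\<mu> * x0 k)" if "k \<in> {1..R}" for k
    using eigen that matvec_transpose_Tmat[of R y k] by (simp add: y_def \<mu>_def)
  have "sqnorm R (matvec R Tmat y) = \<mu>\<^sup>2"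
    using x0 by (simp add: sqnorm_def Ty power_mult_distrib sum_distrib_left[symmetric])
  moreover have "(\<Sum>n\<in>{1..R}. Tmat_col_sum R n * y n * matvec R Tmat y n) = - \<mu> * p"
    by (simp add: p_def Ty sum_distrib_left mult_ac)
  ultimately have "\<mu>\<^sup>2 = gram_principal_form R y - 2 * \<mu> * p"
    using sqnorm_matvec_Tmat_eq[of R y] by simp
  moreover have "\<mu> = gram_principal_form R x0 + 2 * p"
    using sqnorm_matvec_Tmat_eq[of R x0] by (simp add: \<mu>_def y_def p_def)
  ultimately have "2 * \<mu>\<^sup>2 = \<mu> * gram_principal_form R x0 + gram_principal_form R y"
    by (simp add: power2_eq_square algebra_simps)
  also have "\<dots> \<le> \<mu> * (3 * c) + 3 * c * \<mu>"
    using gram_principal_form_le[OF col, of x0] gram_principal_form_le[OF col, of y] x0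
      sqnorm_nonneg[of R y] by (intro add_mono mult_left_mono) (simp_all add: \<mu>_def)
  finally have "\<mu> * \<mu> \<le> \<mu> * (3 * c)"
    by (simp add: power2_eq_square algebra_simps)
  moreover have "0 \<le> c"
    using col[rule_format, of 1] \<open>1 \<le> R\<close> Tmat_col_sqsum_nonneg[of R 1] by simp
  ultimately have "\<mu> \<le> 3 * c"
    using sqnorm_nonneg[of R y] unfolding \<mu>_def
    by (cases "sqnorm R y = 0") (auto simp: mult_le_cancel_left_pos)
  have "sqnorm R (matvec R Tmat x) \<le> \<mu> * sqnorm R x"
    using hom by (simp add: \<mu>_def y_def)
  also have "\<dots> \<le> 3 * c * sqnorm R x"
    using \<open>\<mu> \<le> 3 * c\<close> sqnorm_nonneg by (rule mult_right_mono)
  finally show ?thesis .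
qed

lemma mat_opnorm_Tmat_sq_le:
  assumes "1 \<le> R" and "\<forall>n\<in>{1..R}. Tmat_col_sqsum R n \<le> c"
  shows "(mat_opnorm R Tmat)\<^sup>2 \<le> 3 * c"
proof (rule mat_opnorm_sq_le)
  show "\<forall>x. sqnorm R (matvec R Tmat x) \<le> 3 * c * sqnorm R x"
    using sqnorm_matvec_Tmat_le[OF assms] by blast
  show "0 \<le> 3 * c"
    using assms(2)[rule_format, of 1] assms(1) Tmat_col_sqsum_nonneg[of R 1] by simp
qed

definition harm2 :: "nat \<Rightarrow> real" where
  "harm2 k = (\<Sum>j<k. 1 / (real j + 1)\<^sup>2)"

lemma harm2_le: "harm2 k \<le> real k"
  unfolding harm2_def using sum_bounded_above[of "{..<k}" "\<lambda>j. 1 / (real j + 1)\<^sup>2" 1]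
  by (simp add: power_le_one)

text \<open>\<open>harm2 k + 1/(k + 1)\<close> increases strictly to \<open>\<zeta>(2) = \<pi>\<^sup>2/6\<close>.\<close>
lemma harm2_add_inverse_less: "harm2 k + 1 / (real k + 1) < pi\<^sup>2 / 6"
proof -
  define h where "h k = harm2 k + 1 / (real k + 1)" for k
  have step: "h k < h (Suc k)" for k
  proof -
    have "1 / y\<^sup>2 + 1 / (y + 1) - 1 / y = 1 / (y\<^sup>2 * (y + 1))" if "0 < y" for y :: real
      using that by (simp add: divide_simps) (simp add: algebra_simps power2_eq_square)
    from this[of "real k + 1"]
    have "1 / (real k + 1)\<^sup>2 + 1 / (real k + 2) - 1 / (real k + 1)
        = 1 / ((real k + 1)\<^sup>2 * (real k + 2))"
      by (simp add: add.assoc)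
    moreover have "0 < 1 / ((real k + 1)\<^sup>2 * (real k + 2))"
      by simp
    ultimately have "1 / (real k + 1) < 1 / (real k + 1)\<^sup>2 + 1 / (real k + 2)"
      by linarith
    then show ?thesis
      by (simp add: h_def harm2_def add.commute)
  qed
  have harm2_lim: "harm2 \<longlonglongrightarrow> pi\<^sup>2 / 6"
    using inverse_squares_sums unfolding sums_def harm2_def by (simp add: add.commute)
  have "h \<longlonglongrightarrow> pi\<^sup>2 / 6 + 0"
    unfolding h_def by (intro tendsto_add harm2_lim) real_asymp
  moreover have "incseq h"
    using step by (intro incseq_SucI less_imp_le)
  ultimately have "h (Suc k) \<le> pi\<^sup>2 / 6"
    by (intro incseq_le) auto
  then show ?thesis
    using step[of k] by (simp add: h_def)
qed

lemma Tmat_col_sqsum_eq_harm2: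
  assumes "1 \<le> n" "n \<le> R"
  shows "Tmat_col_sqsum R n = harm2 (n - 1) + harm2 (R - n)"
proof -
  have split: "{1..R} = {1..<n} \<union> insert n {Suc n..R}"
    using assms by auto
  have "Tmat_col_sqsum R n = (\<Sum>m\<in>{1..<n}. (Tmat m n)\<^sup>2) + (\<Sum>m\<in>{Suc n..R}. (Tmat m n)\<^sup>2)"
    unfolding Tmat_col_sqsum_def split by (subst sum.union_disjoint) auto
  also have "(\<Sum>m\<in>{1..<n}. (Tmat m n)\<^sup>2) = harm2 (n - 1)"
    unfolding harm2_def
  proof (rule sum.reindex_bij_witness[of _ "\<lambda>j. n - 1 - j" "\<lambda>m. n - 1 - m"])
    fix m
    assume "m \<in> {1..<n}"
    then show "1 / (real (n - 1 - m) + 1)\<^sup>2 = (Tmat m n)\<^sup>2"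
      by (auto simp: Tmat_def of_nat_diff power2_eq_square algebra_simps)
  qed auto
  also have "(\<Sum>m\<in>{Suc n..R}. (Tmat m n)\<^sup>2) = harm2 (R - n)"
    unfolding harm2_def
  proof (rule sum.reindex_bij_witness[of _ "\<lambda>j. n + 1 + j" "\<lambda>m. m - n - 1"])
    fix m
    assume "m \<in> {Suc n..R}"
    then show "1 / (real (m - n - 1) + 1)\<^sup>2 = (Tmat m n)\<^sup>2"
      by (auto simp: Tmat_def of_nat_diff power2_eq_square algebra_simps)
  qed auto
  finally show ?thesis .
qed

lemma Tmat_col_sqsum_le:
  assumes "n \<in> {1..R}"
  shows "Tmat_col_sqsum R n \<le> real R - 1"
  using assms harm2_le[of "n - 1"] harm2_le[of "R - n"]
  by (simp add: Tmat_col_sqsum_eq_harm2 of_nat_diff)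

lemma four_div_add_le_inverse_add:
  fixes a b :: real
  assumes "0 < a" "0 < b"
  shows "4 / (a + b) \<le> 1 / a + 1 / b"
proof -
  have "1 / a + 1 / b - 4 / (a + b) = (a - b)\<^sup>2 / (a * b * (a + b))"
    using assms by (simp add: field_simps power2_eq_square)
  also have "\<dots> \<ge> 0"
    using assms by simp
  finally show ?thesis
    by simp
qed

lemma Tmat_col_sqsum_less:
  assumes "n \<in> {1..R}"
  shows "Tmat_col_sqsum R n < pi\<^sup>2 / 3 - 4 / (real R + 1)"
proof -
  have n: "1 \<le> n" "n \<le> R"
    using assms by auto
  have "harm2 (n - 1) < pi\<^sup>2 / 6 - 1 / real n"
    using harm2_add_inverse_less[of "n - 1"] n by (simp add: of_nat_diff)
  moreover have "harm2 (R - n) < pi\<^sup>2 / 6 - 1 / (real R - real n + 1)"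
    using harm2_add_inverse_less[of "R - n"] n by (simp add: of_nat_diff)
  moreover have "4 / (real R + 1) \<le> 1 / real n + 1 / (real R - real n + 1)"
    using four_div_add_le_inverse_add[of "real n" "real R - real n + 1"] n by simp
  ultimately show ?thesis
    using Tmat_col_sqsum_eq_harm2[OF n] by simp
qed

lemma mat_opnorm_Tmat_sq_less:
  assumes "1 \<le> R"
  shows "(mat_opnorm R Tmat)\<^sup>2 < pi\<^sup>2 - 12 / (real R + 1)"
proof -
  define c where "c = Max (Tmat_col_sqsum R ` {1..R})"
  have col: "\<forall>n\<in>{1..R}. Tmat_col_sqsum R n \<le> c"
    by (simp add: c_def)
  have "c \<in> Tmat_col_sqsum R ` {1..R}"
    unfolding c_def using assms by (intro Max_in) auto
  then have "3 * c < pi\<^sup>2 - 12 / (real R + 1)"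
    using Tmat_col_sqsum_less by force
  then show ?thesis
    using mat_opnorm_Tmat_sq_le[OF assms col] by linarith
qed

lemma pi_sub_div_sq_ge_small:
  assumes "1 \<le> R" "R \<le> 3"
  shows "3 * (real R - 1) \<le> (pi - pi / (2 * real R))\<^sup>2"
proof -
  have "R = 1 \<or> R = 2 \<or> R = 3"
    using assms by auto
  then have "3 * (real R - 1) \<le> (3 - 3 / (2 * real R))\<^sup>2"
    by (elim disjE) (simp_all add: power2_eq_square)
  also have "\<dots> \<le> (pi - pi / (2 * real R))\<^sup>2"
  proof (rule power_mono)
    have "3 * (1 - 1 / (2 * real R)) \<le> pi * (1 - 1 / (2 * real R))"
      using pi_gt3 assms by (intro mult_right_mono) auto
    then show "3 - 3 / (2 * real R) \<le> pi - pi / (2 * real R)"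
      by (simp add: algebra_simps)
    show "0 \<le> 3 - 3 / (2 * real R)"
      using assms by (auto simp: field_simps)
  qed
  finally show ?thesis .
qed

lemma pi_sub_div_sq_ge_large:
  fixes r :: real
  assumes "4 \<le> r"
  shows "pi\<^sup>2 - 12 / (r + 1) \<le> (pi - pi / (2 * r))\<^sup>2"
proof -
  have "pi * pi \<le> 3.16 * 3.16"
    using pi_approx(2) pi_gt_zero by (intro mult_mono) auto
  then have "pi\<^sup>2 \<le> 10"
    by (simp add: power2_eq_square)
  moreover have "0 \<le> 4 * r\<^sup>2 + 3 * r - 1"
    using assms zero_le_power2[of r] by linarith
  ultimately have "pi\<^sup>2 * (4 * r\<^sup>2 + 3 * r - 1) \<le> 10 * (4 * r\<^sup>2 + 3 * r - 1)"
    by (rule mult_right_mono)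
  also have "\<dots> \<le> 48 * r\<^sup>2"
  proof -
    have "4 * r \<le> r\<^sup>2"
      using assms mult_right_mono[OF assms, of r] by (simp add: power2_eq_square)
    then show ?thesis
      using assms by (simp add: algebra_simps)
  qed
  finally have key: "pi\<^sup>2 * (4 * r - 1) * (r + 1) \<le> 48 * r\<^sup>2"
    by (simp add: power2_eq_square algebra_simps)
  have "(pi - pi / (2 * r))\<^sup>2 - (pi\<^sup>2 - 12 / (r + 1))
      = (48 * r\<^sup>2 - pi\<^sup>2 * (4 * r - 1) * (r + 1)) / (4 * r\<^sup>2 * (r + 1))"
    using assms by (simp add: field_simps power2_eq_square)
  also have "\<dots> \<ge> 0"
    using key assms by (intro divide_nonneg_pos) auto
  finally show ?thesis
    by simp
qed

lemma pi_sub_mat_opnorm_Tmat_ge: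
  assumes "1 \<le> R"
  shows "pi / (2 * real R) \<le> pi - mat_opnorm R Tmat"
proof -
  have "(mat_opnorm R Tmat)\<^sup>2 \<le> (pi - pi / (2 * real R))\<^sup>2"
  proof (cases "R \<le> 3")
    case True
    then show ?thesis
      using mat_opnorm_Tmat_sq_le[OF assms, of "real R - 1"] Tmat_col_sqsum_le
        pi_sub_div_sq_ge_small[OF assms True] by force
  next
    case False
    then show ?thesis
      using mat_opnorm_Tmat_sq_less[OF assms] pi_sub_div_sq_ge_large[of "real R"] by simp
  qed
  moreover have "pi / (2 * real R) \<le> pi"
    using assms pi_gt_zero by (simp add: divide_le_eq)
  ultimately show ?thesis
    using power2_le_imp_le by fastforce
qed

theorem mainTheorem14:
  shows "(\<forall>S::nat. S \<ge> 1 \<longrightarrow>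
            (mat_opnorm (2 * S + 1) Tmat)\<^sup>2 < pi\<^sup>2 - 6 / (real S + 1))
       \<and> (\<forall>R::nat. R \<ge> 1 \<longrightarrow> pi - mat_opnorm R Tmat \<ge> pi / (2 * real R))"
proof (intro conjI allI impI)
  fix S :: nat
  have "(mat_opnorm (2 * S + 1) Tmat)\<^sup>2 < pi\<^sup>2 - 12 / (real (2 * S + 1) + 1)"
    by (rule mat_opnorm_Tmat_sq_less) simp
  also have "12 / (real (2 * S + 1) + 1) = 6 / (real S + 1)"
    by (simp add: field_simps)
  finally show "(mat_opnorm (2 * S + 1) Tmat)\<^sup>2 < pi\<^sup>2 - 6 / (real S + 1)" .
next
  fix R :: nat
  assume "R \<ge> 1"
  then show "pi - mat_opnorm R Tmat \<ge> pi / (2 * real R)"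
    by (rule pi_sub_mat_opnorm_Tmat_ge)
qed

end
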